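(* Let $(X_n)_{n\ge0}$ be the stationary forward Markov process on $\mathbb{T}^n$ with initial density $\theta$ and transition kernel $\gamma$: $X_0$ has density $\theta$, and given $X_k=x$, $X_{k+1}=x+V$ where $V$ has density $v\mapsto\gamma(x,v)$ on $\mathbb{R}^n$. Let $f,g\in\mathcal{L}^2(\theta)$ with $\int f\theta\,dx=\int g\theta\,dx=0$. Then $\mathbb{E}[g(X_0)f(X_n)]\to0$ exponentially fast as $n\to\infty$: there exist $\rho\in(0,1)$ (independent of $f,g$) and $C=C(f,g)$ with $|\mathbb{E}[g(X_0)f(X_n)]|\le C\rho^n$ for all $n$.
   Context: Let $\mathbb{T}^n=\mathbb{R}^n/\mathbb{Z}^n$; $x\pm v$ is taken mod $\mathbb{Z}^n$. Let $L(x,v)=\frac12|v|^2-U(x)+\langle P,v\rangle$ with $U\in C^\infty(\mathbb{T}^n)$, $P\in\mathbb{R}^n$. Fix $\epsilon>0$, $h=1$. Let $\phi,\bar\phi$ (differentiable on $\mathbb{T}^n$) and $\lambda\in\mathbb{R}$ satisfy $-\epsilon\ln\int_{\mathbb{R}^n}e^{-(L(x,v)+\phi(x+v))/\epsilon}dv=\phi(x)+\lambda$ and $-\epsilon\ln\int_{\mathbb{R}^n}e^{-(L(x+v,-v)+\bar\phi(x+v))/\epsilon}dv=\bar\phi(x)+\lambda$, normalized so that $\theta=e^{-(\phi+\bar\phi)/\epsilon}$ is a probability density on $\mathbb{T}^n$. Set $\gamma(x,v)=e^{-(L(x,v)+\phi(x+v)-\phi(x)-\lambda)/\epsilon}$ and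 $Q(x,v)=\theta(x-v)\gamma(x-v,v)/\theta(x)$; it is known (assumed) that $\int\gamma(x,v)dv=\int Q(x,v)dv=1$ for all $x$, that $\theta\gamma$ is holonomic ($\int(\varphi(x+v)-\varphi(x))\theta(x)\gamma(x,v)dxdv=0$ for continuous $\varphi$), and that the positive fixed point of $\mathcal{F}$ is unique up to scaling. $(\mathcal{F}g)(x)=\int\gamma(x,v)g(x+v)dv$ and $(\mathcal{F}^*f)(x)=\int Q(x,v)f(x-v)dv$ (the adjoint of $\mathcal{F}$ in $\mathcal{L}^2(\theta)=L^2(\mathbb{T}^n,\theta\,dx)$). *)

theory Defs
  imports "HOL-Analysis.Analysis"
begin

text \<open>Functions on the torus T^n = R^n/Z^n are represented as Z^n-periodic
  functions on real^'n.\<close>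

definition lattice_periodic :: "(real^'n \<Rightarrow> 'a) \<Rightarrow> bool" where
  "lattice_periodic f \<longleftrightarrow> (\<forall>x (k::int^'n). f (x + (\<chi> i. of_int (k$i))) = f x)"

coinductive smooth_fun :: "(real^'n \<Rightarrow> real) \<Rightarrow> bool" where
  "continuous_on UNIV f \<Longrightarrow>
   (\<forall>i. \<exists>g. (\<forall>x. ((\<lambda>t. f (x + t *\<^sub>R axis i 1)) has_real_derivative g x) (at 0)) \<and> smooth_fun g)
   \<Longrightarrow> smooth_fun f"

text \<open>Integral over the torus = integral over the unit cube (fundamental domain).\<close>
definition torus_int :: "(real^'n \<Rightarrow> real) \<Rightarrow> real" where
  "torus_int h = (LINT x : cbox 0 One | lborel. h x)"

definition Lag :: "(real^'n \<Rightarrow> real) \<Rightarrow> real^'n \<Rightarrow> real^'n \<Rightarrow> real^'n \<Rightarrow> real" where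
  "Lag U P x v = (1/2) * (norm v)^2 - U x + inner P v"

definition theta_of :: "real \<Rightarrow> (real^'n \<Rightarrow> real) \<Rightarrow> (real^'n \<Rightarrow> real) \<Rightarrow> real^'n \<Rightarrow> real" where
  "theta_of eps phi phib x = exp (- (phi x + phib x) / eps)"

definition gamma_of :: "(real^'n \<Rightarrow> real) \<Rightarrow> real^'n \<Rightarrow> real \<Rightarrow> (real^'n \<Rightarrow> real) \<Rightarrow> real
    \<Rightarrow> real^'n \<Rightarrow> real^'n \<Rightarrow> real" where
  "gamma_of U P eps phi lam x v = exp (- (Lag U P x v + phi (x + v) - phi x - lam) / eps)"

definition Q_of :: "(real^'n \<Rightarrow> real) \<Rightarrow> (real^'n \<Rightarrow> real^'n \<Rightarrow> real) \<Rightarrow> real^'n \<Rightarrow> real^'n \<Rightarrow> real" where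
  "Q_of theta gam x v = theta (x - v) * gam (x - v) v / theta x"

primrec Fop :: "(real^'n \<Rightarrow> real^'n \<Rightarrow> real) \<Rightarrow> nat \<Rightarrow> (real^'n \<Rightarrow> real) \<Rightarrow> real^'n \<Rightarrow> real" where
  "Fop gam 0 f = f"
| "Fop gam (Suc m) f = (\<lambda>x. LINT v | lborel. gam x v * Fop gam m f (x + v))"

text \<open>E[g(X_0) f(X_m)] for the Markov chain with initial density theta and kernel gam:
  the integral of g(x_0) f(x_m) against the joint density
  theta(x_0) gam(x_0,v_1) ... gam(x_{m-1},v_m), written as nested iterated integrals.\<close>
definition markov_corr :: "(real^'n \<Rightarrow> real) \<Rightarrow> (real^'n \<Rightarrow> real^'n \<Rightarrow> real)
    \<Rightarrow> (real^'n \<Rightarrow> real) \<Rightarrow> (real^'n \<Rightarrow> real) \<Rightarrow> nat \<Rightarrow> real" where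
  "markov_corr theta gam g f m = torus_int (\<lambda>x. theta x * g x * Fop gam m f x)"

definition in_L2 :: "(real^'n \<Rightarrow> real) \<Rightarrow> (real^'n \<Rightarrow> real) \<Rightarrow> bool" where
  "in_L2 theta f \<longleftrightarrow> f \<in> borel_measurable lborel \<and> lattice_periodic f \<and>
     set_integrable lborel (cbox 0 One) (\<lambda>x. (f x)^2 * theta x)"

definition pos_fixed :: "(real^'n \<Rightarrow> real^'n \<Rightarrow> real) \<Rightarrow> (real^'n \<Rightarrow> real) \<Rightarrow> bool" where
  "pos_fixed gam g \<longleftrightarrow> continuous_on UNIV g \<and> lattice_periodic g \<and> (\<forall>x. g x > 0) \<and>
     (\<forall>x. integrable lborel (\<lambda>v. gam x v * g (x + v)) \<and> (LINT v | lborel. gam x v * g (x + v)) = g x)"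

end

theory Submission
  imports Defs
begin

(* The proof is a Doeblin-type argument in L^2(theta).  Let F be the transfer operator
   (F h)(x) = int gamma(x,v) h(x+v) dv.  By compactness of the unit cube and continuity and
   positivity of theta and gamma there is 0 < alpha <= 1/2 with
   gamma(x, y - x) >= alpha * theta(y) for all x, y in the cube (the minorization).  Writing
   gamma = s + alpha * theta(x + .) on the cube with s >= 0 of mass 1 - alpha, Cauchy-Schwarz
   together with the theta-invariance of F (which is the hypothesis int Q(x,v) dv = 1) gives the
   one-step estimate  ||F h - c||^2 <= (1 - alpha)^2 ||h||^2  for a suitable constant c.  Iterating,
   F^m f stays within (1 - alpha)^m ||f|| of a constant, and since g has mean zero the
   correlation E[g(X_0) f(X_m)] = <g, F^m f> decays like (1 - alpha)^m. *)

section \<open>Lattice translations and the fundamental cell\<close>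

definition lattice_vec :: "int^'n \<Rightarrow> real^'n" where
  "lattice_vec k = (\<chi> i. of_int (k$i))"

text \<open>The half-open unit cube: every point has exactly one lattice translate in it.\<close>
definition unit_cell :: "(real^'n) set" where
  "unit_cell = {x. \<forall>i. 0 \<le> x$i \<and> x$i < 1}"

abbreviation cube :: "(real^'n) set" where
  "cube \<equiv> cbox 0 One"

lemma lattice_vec_uminus: "lattice_vec (- k) = - lattice_vec k"
  by (simp add: lattice_vec_def vec_eq_iff)

lemma periodic_lattice_vec: "lattice_periodic f \<Longrightarrow> f (x + lattice_vec k) = f x"
  by (simp add: lattice_periodic_def lattice_vec_def)

lemma lattice_periodic_lattice_vec: "lattice_periodic f \<longleftrightarrow> (\<forall>x k. f (x + lattice_vec k) = f x)"
  by (simp add: lattice_periodic_def lattice_vec_def)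

lemma unit_cell_borel[measurable]: "unit_cell \<in> sets (borel :: (real^'n) measure)"
proof -
  have lower: "\<And>i. {x::real^'n. 0 \<le> x$i} \<in> sets borel"
    by (intro borel_closed closed_Collect_le) (auto intro: continuous_intros)
  have upper: "\<And>i. {x::real^'n. x$i < 1} \<in> sets borel"
    by (intro borel_open open_Collect_less) (auto intro: continuous_intros)
  have cell: "unit_cell = (\<Inter>i\<in>UNIV. {x::real^'n. 0 \<le> x$i} \<inter> {x. x$i < 1})"
    by (auto simp: unit_cell_def)
  have "(\<Inter>i\<in>UNIV. {x::real^'n. 0 \<le> x$i} \<inter> {x. x$i < 1}) \<in> sets borel"
    by (rule sets.finite_INT) (use lower upper in auto)
  then show ?thesis by (subst cell)
qed

lemma cube_borel[measurable]: "(cube :: (real^'n) set) \<in> sets borel"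
  by (simp add: borel_closed)

lemma unit_cell_unique: "\<exists>!k. x - lattice_vec k \<in> unit_cell"
proof
  show "x - lattice_vec (\<chi> i. floor (x$i)) \<in> unit_cell"
    by (auto simp: unit_cell_def lattice_vec_def) linarith
next
  fix k assume "x - lattice_vec k \<in> unit_cell"
  then have "\<forall>i. of_int (k$i) \<le> x$i \<and> x$i < of_int (k$i) + 1"
    by (auto simp: unit_cell_def lattice_vec_def algebra_simps)
  then show "k = (\<chi> i. floor (x$i))"
    by (auto simp: vec_eq_iff intro!: floor_unique[symmetric])
qed

lemma One_nth[simp]: "(One::real^'n) $ i = 1"
proof -
  have "axis i (1::real) \<in> (Basis :: (real^'n) set)" by (auto simp: Basis_vec_def)
  then have "(One::real^'n) \<bullet> axis i 1 = 1" by (rule inner_sum_Basis)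
  then show ?thesis by (simp only: cart_eq_inner_axis)
qed

lemma sum_Basis_nth[simp]: "(\<Sum>x\<in>(Basis::(real^'n) set). x $ i) = 1"
  using One_nth[of i] by (simp only: sum_component)

lemma AE_unit_cell_cube: "AE x in lborel. indicator unit_cell x = (indicator cube x :: 'b::zero_neq_one)"
proof -
  have "cube - box 0 One \<in> null_sets (lborel :: (real^'n) measure)"
    using negligible_frontier_interval[of "0::real^'n" One]
    by (auto simp: null_sets_completion_iff negligible_iff_null_sets)
  moreover have "box 0 One \<subseteq> unit_cell" "unit_cell \<subseteq> (cube :: (real^'n) set)"
    by (auto simp: unit_cell_def mem_box_cart less_imp_le)
  then have "{x\<in>space lborel. indicator unit_cell x \<noteq> (indicator cube x :: 'b)} \<subseteq> cube - box 0 One"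
    by (auto simp: indicator_def)
  ultimately show ?thesis by (rule AE_I')
qed

lemma nn_integral_unit_cell_cube:
  fixes F :: "real^'n \<Rightarrow> ennreal"
  shows "(\<integral>\<^sup>+x. F x * indicator unit_cell x \<partial>lborel) = (\<integral>\<^sup>+x. F x * indicator cube x \<partial>lborel)"
  by (rule nn_integral_cong_AE) (use AE_unit_cell_cube[where 'b=ennreal] in \<open>auto elim!: eventually_mono\<close>)

lemma nn_integral_translate:
  fixes G :: "'a::euclidean_space \<Rightarrow> ennreal"
  assumes [measurable]: "G \<in> borel_measurable borel"
  shows "(\<integral>\<^sup>+v. G (c + v) \<partial>lborel) = (\<integral>\<^sup>+x. G x \<partial>lborel)"
proof -
  have "(\<integral>\<^sup>+x. G x \<partial>lborel) = (\<integral>\<^sup>+x. G x \<partial>distr lborel borel ((+) c))"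
    by (simp add: lborel_distr_plus)
  also have "\<dots> = (\<integral>\<^sup>+v. G (c + v) \<partial>lborel)"
    by (subst nn_integral_distr) auto
  finally show ?thesis by simp
qed

lemma nn_integral_reflect:
  fixes G :: "'a::euclidean_space \<Rightarrow> ennreal"
  assumes [measurable]: "G \<in> borel_measurable borel"
  shows "(\<integral>\<^sup>+v. G (c - v) \<partial>lborel) = (\<integral>\<^sup>+x. G x \<partial>lborel)"
proof -
  have "lborel = density (distr lborel borel (\<lambda>x. c + (-1) *\<^sub>R x)) (\<lambda>_. 1)"
    using lborel_affine[of "-1" c] by simp
  then have "(\<integral>\<^sup>+x. G x \<partial>lborel) = (\<integral>\<^sup>+x. G x \<partial>density (distr lborel borel (\<lambda>x. c + (-1) *\<^sub>R x)) (\<lambda>_. 1))"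
    by simp
  also have "\<dots> = (\<integral>\<^sup>+v. G (c - v) \<partial>lborel)"
    by (subst nn_integral_density) (auto simp: nn_integral_distr)
  finally show ?thesis by simp
qed

lemma integral_translate:
  fixes F :: "'a::euclidean_space \<Rightarrow> real"
  assumes [measurable]: "F \<in> borel_measurable borel" and F: "integrable lborel F"
  shows "integrable lborel (\<lambda>v. F (c + v))" "(LINT v|lborel. F (c + v)) = (LINT x|lborel. F x)"
proof -
  have "integrable (distr lborel borel ((+) c)) F" using F by (simp add: lborel_distr_plus)
  then show "integrable lborel (\<lambda>v. F (c + v))" by (subst (asm) integrable_distr_eq) auto
  have "(LINT x|lborel. F x) = (LINT x|distr lborel borel ((+) c). F x)" by (simp add: lborel_distr_plus)
  also have "\<dots> = (LINT v|lborel. F (c + v))" by (rule integral_distr) auto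
  finally show "(LINT v|lborel. F (c + v)) = (LINT x|lborel. F x)" by simp
qed

lemma nn_integral_tiling:
  fixes G :: "real^'n \<Rightarrow> ennreal"
  assumes [measurable]: "G \<in> borel_measurable borel"
  shows "(\<integral>\<^sup>+x. G x \<partial>lborel) =
    (\<integral>\<^sup>+k. (\<integral>\<^sup>+x. G (x + lattice_vec k) * indicator unit_cell x \<partial>lborel) \<partial>count_space UNIV)"
proof -
  interpret pair_sigma_finite "count_space (UNIV :: (int^'n) set)" "lborel :: (real^'n) measure"
    unfolding pair_sigma_finite_def by (simp add: sigma_finite_measure_count_space sigma_finite_lborel)
  have partition: "(\<integral>\<^sup>+k. G x * indicator unit_cell (x - lattice_vec k) \<partial>count_space UNIV) = G x" for x
  proof -
    obtain k0 where k0: "x - lattice_vec k0 \<in> unit_cell"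
      and unique: "\<And>k. x - lattice_vec k \<in> unit_cell \<Longrightarrow> k = k0"
      using unit_cell_unique[of x] unfolding Ex1_def by blast
    have "G x * indicator unit_cell (x - lattice_vec k) = G x * indicator {k0} k" for k
      using k0 unique[of k] by (cases "k = k0") (auto simp: indicator_def)
    then have "(\<integral>\<^sup>+k. G x * indicator unit_cell (x - lattice_vec k) \<partial>count_space UNIV)
        = (\<integral>\<^sup>+k. G x * indicator {k0} k \<partial>count_space UNIV)"
      by (intro nn_integral_cong) simp
    then show ?thesis by (simp add: emeasure_count_space_finite)
  qed
  have "(\<integral>\<^sup>+x. G x \<partial>lborel) = (\<integral>\<^sup>+x. (\<integral>\<^sup>+k. G x * indicator unit_cell (x - lattice_vec k) \<partial>count_space UNIV) \<partial>lborel)"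
    by (simp only: partition)
  also have "\<dots> = (\<integral>\<^sup>+k. (\<integral>\<^sup>+x. G x * indicator unit_cell (x - lattice_vec k) \<partial>lborel) \<partial>count_space UNIV)"
    by (rule Fubini') (rule measurable_pair_measure_countable1, simp_all)
  also have "\<dots> = (\<integral>\<^sup>+k. (\<integral>\<^sup>+x. G (x + lattice_vec k) * indicator unit_cell x \<partial>lborel) \<partial>count_space UNIV)"
  proof (rule nn_integral_cong)
    fix k :: "int^'n"
    have "(\<integral>\<^sup>+x. G x * indicator unit_cell (x - lattice_vec k) \<partial>lborel)
       = (\<integral>\<^sup>+v. G (lattice_vec k + v) * indicator unit_cell (lattice_vec k + v - lattice_vec k) \<partial>lborel)"
      by (rule nn_integral_translate[symmetric]) measurable
    then show "(\<integral>\<^sup>+x. G x * indicator unit_cell (x - lattice_vec k) \<partial>lborel)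
        = (\<integral>\<^sup>+x. G (x + lattice_vec k) * indicator unit_cell x \<partial>lborel)"
      by (simp add: add.commute)
  qed
  finally show ?thesis .
qed

lemma nn_integral_tiling_minus:
  fixes G :: "real^'n \<Rightarrow> ennreal"
  assumes [measurable]: "G \<in> borel_measurable borel"
  shows "(\<integral>\<^sup>+x. G x \<partial>lborel) =
    (\<integral>\<^sup>+k. (\<integral>\<^sup>+x. G (x - lattice_vec k) * indicator unit_cell x \<partial>lborel) \<partial>count_space UNIV)"
proof -
  have "bij_betw uminus (UNIV :: (int^'n) set) UNIV"
    by (rule bij_betwI[of _ _ _ uminus]) auto
  from nn_integral_bij_count_space[OF this,
      of "\<lambda>k. \<integral>\<^sup>+x. G (x + lattice_vec k) * indicator unit_cell x \<partial>lborel"]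
  show ?thesis by (subst nn_integral_tiling[OF assms]) (simp add: lattice_vec_uminus)
qed

section \<open>Weighted Cauchy--Schwarz inequalities\<close>

lemma quadratic_nonneg_discriminant:
  fixes A B K :: real
  assumes A: "A \<ge> 0" and nonneg: "\<And>t. 0 \<le> t^2 * A - 2 * t * K + B"
  shows "K^2 \<le> A * B"
proof (cases "A = 0")
  case True
  show ?thesis
  proof (rule ccontr)
    assume "\<not> ?thesis"
    then have "K \<noteq> 0" using True by simp
    have "0 \<le> ((B + 1) / (2 * K))^2 * A - 2 * ((B + 1) / (2 * K)) * K + B" by (rule nonneg)
    also have "\<dots> = -1" using \<open>K \<noteq> 0\<close> True by (simp add: field_simps)
    finally show False by simp
  qed
next
  case False
  then have "A > 0" using A by simp
  have "0 \<le> (K / A)^2 * A - 2 * (K / A) * K + B" by (rule nonneg)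
  also have "\<dots> = B - K^2 / A"
    using \<open>A > 0\<close> by (simp add: field_simps power2_eq_square)
  finally show ?thesis using \<open>A > 0\<close> by (simp add: field_simps)
qed

lemma weighted_cauchy_schwarz:
  fixes w a b :: "'a \<Rightarrow> real"
  assumes w: "\<And>x. 0 \<le> w x"
    and ia: "integrable M (\<lambda>x. w x * (a x)^2)" and ib: "integrable M (\<lambda>x. w x * (b x)^2)"
    and iab: "integrable M (\<lambda>x. w x * a x * b x)"
  shows "(\<integral>x. w x * a x * b x \<partial>M)^2 \<le> (\<integral>x. w x * (a x)^2 \<partial>M) * (\<integral>x. w x * (b x)^2 \<partial>M)"
proof (rule quadratic_nonneg_discriminant)
  show "0 \<le> (\<integral>x. w x * (a x)^2 \<partial>M)" using w by (intro integral_nonneg_AE) auto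
  fix t :: real
  have "0 \<le> (\<integral>x. w x * (t * a x - b x)^2 \<partial>M)" using w by (intro integral_nonneg_AE) auto
  also have "\<dots> = (\<integral>x. t^2 * (w x * (a x)^2) - 2 * t * (w x * a x * b x) + w x * (b x)^2 \<partial>M)"
    by (rule Bochner_Integration.integral_cong) (auto simp: power2_eq_square algebra_simps)
  also have "\<dots> = t^2 * (\<integral>x. w x * (a x)^2 \<partial>M) - 2 * t * (\<integral>x. w x * a x * b x \<partial>M) + (\<integral>x. w x * (b x)^2 \<partial>M)"
    using ia ib iab by simp
  finally show "0 \<le> t^2 * (\<integral>x. w x * (a x)^2 \<partial>M) - 2 * t * (\<integral>x. w x * a x * b x \<partial>M) + (\<integral>x. w x * (b x)^2 \<partial>M)" .
qed

text \<open>A product of two functions that are square integrable for the weight \<open>w\<close> is integrable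
  for \<open>w\<close>, by \<open>|a b| \<le> a\<^sup>2 + b\<^sup>2\<close>.\<close>
lemma integrable_weighted_product:
  fixes w a b :: "'a \<Rightarrow> real"
  assumes w: "\<And>x. 0 \<le> w x"
    and ia: "integrable M (\<lambda>x. w x * (a x)^2)" and ib: "integrable M (\<lambda>x. w x * (b x)^2)"
    and meas: "(\<lambda>x. w x * a x * b x) \<in> borel_measurable M"
  shows "integrable M (\<lambda>x. w x * a x * b x)"
proof (rule Bochner_Integration.integrable_bound)
  show "integrable M (\<lambda>x. w x * (a x)^2 + w x * (b x)^2)" using ia ib by simp
  show "AE x in M. norm (w x * a x * b x) \<le> norm (w x * (a x)^2 + w x * (b x)^2)"
  proof (intro AE_I2)
    fix x
    have "2 * \<bar>a x\<bar> * \<bar>b x\<bar> \<le> \<bar>a x\<bar>^2 + \<bar>b x\<bar>^2" by (rule sum_squares_bound)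
    moreover have "0 \<le> \<bar>a x\<bar> * \<bar>b x\<bar>" by simp
    ultimately have "\<bar>a x * b x\<bar> \<le> (a x)^2 + (b x)^2" unfolding abs_mult power2_abs by linarith
    then have "w x * \<bar>a x * b x\<bar> \<le> w x * ((a x)^2 + (b x)^2)" using w by (rule mult_left_mono)
    then show "norm (w x * a x * b x) \<le> norm (w x * (a x)^2 + w x * (b x)^2)"
      using w[of x] by (simp add: abs_mult distrib_left mult.assoc)
  qed
qed (rule meas)

lemma weighted_mean_square_le:
  fixes s g :: "'a \<Rightarrow> real"
  assumes s: "\<And>x. 0 \<le> s x" and int_s: "integrable M s" and isg2: "integrable M (\<lambda>x. s x * (g x)^2)"
    and [measurable]: "g \<in> borel_measurable M"
  shows "integrable M (\<lambda>x. s x * g x)"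
    and "(\<integral>x. s x * g x \<partial>M)^2 \<le> (\<integral>x. s x \<partial>M) * (\<integral>x. s x * (g x)^2 \<partial>M)"
proof -
  have [measurable]: "s \<in> borel_measurable M" using int_s by (rule borel_measurable_integrable)
  have is1: "integrable M (\<lambda>x. s x * 1^2)" using int_s by simp
  have "integrable M (\<lambda>x. s x * g x * 1)"
    by (rule integrable_weighted_product[OF s isg2 is1]) measurable
  then show isg: "integrable M (\<lambda>x. s x * g x)" by simp
  have "(\<integral>x. s x * g x * 1 \<partial>M)^2 \<le> (\<integral>x. s x * (g x)^2 \<partial>M) * (\<integral>x. s x * 1^2 \<partial>M)"
    using s isg2 is1 isg by (intro weighted_cauchy_schwarz) auto
  then show "(\<integral>x. s x * g x \<partial>M)^2 \<le> (\<integral>x. s x \<partial>M) * (\<integral>x. s x * (g x)^2 \<partial>M)"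
    by (simp add: mult.commute)
qed

lemma ennreal_solve_linear:
  fixes I X :: ennreal and a :: real
  assumes eq: "I = X + ennreal a * I" and fin: "I < \<infinity>" and a: "0 \<le> a" "a \<le> 1"
  shows "X = ennreal (1 - a) * I"
proof -
  obtain r where r: "I = ennreal r" "0 \<le> r" using fin by (cases I) auto
  have "X \<le> I" using eq by (metis le_iff_add)
  then obtain x where x: "X = ennreal x" "0 \<le> x" using r by (cases X) (auto simp: top_unique)
  have "ennreal r = ennreal (x + a * r)"
    using eq r x a by (simp add: ennreal_mult ennreal_plus[symmetric])
  then have "r = x + a * r" using r x a by (subst (asm) ennreal_inj) auto
  then show ?thesis using r x a by (simp add: ennreal_mult[symmetric] algebra_simps)
qed

section \<open>Kernels on the torus with an invariant density\<close>

text \<open>The setting of the argument: a continuous positive periodic probability density \<open>\<theta>\<close> on the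
  torus and a continuous positive transition density \<open>\<gamma> x\<close>, periodic in \<open>x\<close>, such that the
  reversed kernel \<open>Q\<close> is again a transition density; the latter says that \<open>\<theta>\<close> is invariant.\<close>
locale torus_kernel =
  fixes \<theta> :: "real^'n \<Rightarrow> real" and \<gamma> :: "real^'n \<Rightarrow> real^'n \<Rightarrow> real"
  assumes theta_cont: "continuous_on UNIV \<theta>" and theta_pos: "\<And>x. 0 < \<theta> x"
    and theta_per: "lattice_periodic \<theta>" and theta_norm: "torus_int \<theta> = 1"
    and gamma_cont: "continuous_on UNIV (\<lambda>p. \<gamma> (fst p) (snd p))"
    and gamma_pos: "\<And>x v. 0 < \<gamma> x v"
    and gamma_per: "\<And>v. lattice_periodic (\<lambda>x. \<gamma> x v)"
    and gamma_integrable: "\<And>x. integrable lborel (\<gamma> x)"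
    and gamma_mass: "\<And>x. (LINT v|lborel. \<gamma> x v) = 1"
    and Q_integrable: "\<And>x. integrable lborel (Q_of \<theta> \<gamma> x)"
    and Q_mass: "\<And>x. (LINT v|lborel. Q_of \<theta> \<gamma> x v) = 1"
begin

lemma theta_shift: "\<theta> (x - lattice_vec k) = \<theta> x"
  using periodic_lattice_vec[OF theta_per, of "x - lattice_vec k" k] by simp

lemma gamma_shift: "\<gamma> (x - lattice_vec k) v = \<gamma> x v"
  using periodic_lattice_vec[OF gamma_per, of "x - lattice_vec k" k] by simp

lemma theta_borel[measurable]: "\<theta> \<in> borel_measurable borel"
  by (rule borel_measurable_continuous_onI[OF theta_cont])

lemma gamma_borel: "(\<lambda>p. \<gamma> (fst p) (snd p)) \<in> borel_measurable borel"
  by (rule borel_measurable_continuous_onI[OF gamma_cont])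

lemma theta_borel_comp[measurable (raw)]:
  "f \<in> borel_measurable M \<Longrightarrow> (\<lambda>z. \<theta> (f z)) \<in> borel_measurable M"
  using measurable_compose[OF _ theta_borel] by simp

lemma gamma_borel_comp[measurable (raw)]:
  assumes "f \<in> borel_measurable M" "g \<in> borel_measurable M"
  shows "(\<lambda>z. \<gamma> (f z) (g z)) \<in> borel_measurable M"
proof -
  have "(\<lambda>z. (f z, g z)) \<in> measurable M (borel \<Otimes>\<^sub>M borel)"
    using assms by (rule measurable_Pair)
  then have "(\<lambda>z. (f z, g z)) \<in> measurable M borel" by (simp add: borel_prod)
  from measurable_compose[OF this gamma_borel] show ?thesis by simp
qed

lemma theta_cube_integrable: "integrable lborel (\<lambda>y. indicator cube y * \<theta> y)"
  using borel_integrable_compact[OF compact_cbox continuous_on_subset[OF theta_cont], of 0 One] by simp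

lemma theta_cube_integral: "(LINT y|lborel. indicator cube y * \<theta> y) = 1"
  using theta_norm by (simp add: torus_int_def set_lebesgue_integral_def)

lemma theta_cube_nn_integral: "(\<integral>\<^sup>+y. ennreal (\<theta> y) * indicator cube y \<partial>lborel) = 1"
proof -
  have "(\<integral>\<^sup>+y. ennreal (\<theta> y) * indicator cube y \<partial>lborel) = (\<integral>\<^sup>+y. ennreal (indicator cube y * \<theta> y) \<partial>lborel)"
    by (intro nn_integral_cong) (simp split: split_indicator)
  also have "\<dots> = ennreal (LINT y|lborel. indicator cube y * \<theta> y)"
    using theta_cube_integrable theta_pos
    by (intro nn_integral_eq_integral AE_I2 mult_nonneg_nonneg) (auto intro: less_imp_le)
  finally show ?thesis by (simp add: theta_cube_integral)
qed

lemma mass_into_point: "(\<integral>\<^sup>+v. ennreal (\<theta> (y - v) * \<gamma> (y - v) v) \<partial>lborel) = ennreal (\<theta> y)"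
proof -
  let ?Q = "Q_of \<theta> \<gamma> y"
  have Q_nonneg: "0 \<le> ?Q v" for v
    using theta_pos[of y] theta_pos[of "y - v"] gamma_pos[of "y - v" v] by (simp add: Q_of_def)
  have "\<theta> (y - v) * \<gamma> (y - v) v = \<theta> y * ?Q v" for v
    using theta_pos[of y] by (simp add: Q_of_def)
  then have "(\<integral>\<^sup>+v. ennreal (\<theta> (y - v) * \<gamma> (y - v) v) \<partial>lborel) = (\<integral>\<^sup>+v. ennreal (\<theta> y) * ennreal (?Q v) \<partial>lborel)"
    using theta_pos[of y] Q_nonneg by (simp add: ennreal_mult)
  also have "\<dots> = ennreal (\<theta> y) * (\<integral>\<^sup>+v. ennreal (?Q v) \<partial>lborel)"
    by (rule nn_integral_cmult) (simp add: Q_of_def, measurable)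
  also have "(\<integral>\<^sup>+v. ennreal (?Q v) \<partial>lborel) = ennreal (LINT v|lborel. ?Q v)"
    using Q_integrable Q_nonneg by (intro nn_integral_eq_integral) auto
  finally show ?thesis by (simp add: Q_mass)
qed

text \<open>Doeblin minorization: on the compact cube the continuous positive ratio
  \<open>\<gamma> x (y - x) / \<theta> y\<close> is bounded below by a positive constant.\<close>
lemma doeblin_minorization: "\<exists>a>0. a \<le> 1/2 \<and> (\<forall>x\<in>cube. \<forall>y\<in>cube. a * \<theta> y \<le> \<gamma> x (y - x))"
proof -
  let ?ratio = "\<lambda>p::(real^'n)\<times>(real^'n). \<gamma> (fst p) (snd p - fst p) / \<theta> (snd p)"
  have "continuous_on UNIV (\<lambda>p::(real^'n)\<times>(real^'n). (fst p, snd p - fst p))"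
    by (intro continuous_on_Pair continuous_on_diff continuous_on_fst continuous_on_snd continuous_on_id)
  from continuous_on_compose2[OF gamma_cont this]
  have "continuous_on UNIV (\<lambda>p::(real^'n)\<times>(real^'n). \<gamma> (fst p) (snd p - fst p))" by simp
  moreover have "continuous_on UNIV (\<lambda>p::(real^'n)\<times>(real^'n). \<theta> (snd p))"
    by (rule continuous_on_compose2[OF theta_cont]) (auto intro: continuous_intros)
  ultimately have "continuous_on UNIV ?ratio"
    using theta_pos by (intro continuous_on_divide) (auto simp: less_imp_neq[symmetric])
  then have "continuous_on (cube \<times> cube) ?ratio" by (rule continuous_on_subset) simp
  moreover have "compact (cube \<times> cube)" by (intro compact_Times compact_cbox)
  moreover have "cube \<times> cube \<noteq> {}" by (simp add: box_ne_empty(1) inner_Basis_mono)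
  ultimately obtain p where "p \<in> cube \<times> cube" and p_min: "\<forall>q\<in>cube \<times> cube. ?ratio p \<le> ?ratio q"
    using continuous_attains_inf by blast
  define a where "a = min (?ratio p) (1/2)"
  have "0 < ?ratio p" using gamma_pos theta_pos by simp
  then have "0 < a" "a \<le> 1/2" unfolding a_def by (simp, linarith)
  moreover have "a * \<theta> y \<le> \<gamma> x (y - x)" if "x \<in> cube" "y \<in> cube" for x y
  proof -
    have "?ratio p \<le> ?ratio (x, y)" using p_min that by blast
    then have "a \<le> \<gamma> x (y - x) / \<theta> y" by (simp add: a_def)
    then show ?thesis using theta_pos[of y] by (simp add: field_simps)
  qed
  ultimately show ?thesis by blast
qed

text \<open>A fixed Doeblin constant; \<open>1 - \<alpha>\<close> will be the rate of decay.\<close>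
definition \<alpha> :: real where
  "\<alpha> = (SOME a. 0 < a \<and> a \<le> 1/2 \<and> (\<forall>x\<in>cube. \<forall>y\<in>cube. a * \<theta> y \<le> \<gamma> x (y - x)))"

lemma alpha_pos: "0 < \<alpha>" and alpha_le_half: "\<alpha> \<le> 1/2"
  and alpha_minorizes: "x \<in> cube \<Longrightarrow> y \<in> cube \<Longrightarrow> \<alpha> * \<theta> y \<le> \<gamma> x (y - x)"
  using someI_ex[OF doeblin_minorization] unfolding \<alpha>_def[symmetric] by auto

text \<open>Summed over the lattice, the flow out of the cube into the translates of \<open>y\<close> is \<open>\<theta> y\<close>:
  periodicity turns the sum into the total inflow into \<open>y\<close>, which is \<open>\<theta> y\<close> by invariance.\<close>
lemma inflow_from_cube:
  "(\<integral>\<^sup>+k. (\<integral>\<^sup>+x. ennreal (\<theta> x) * indicator cube x * ennreal (\<gamma> x (y + lattice_vec k - x)) \<partial>lborel)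
      \<partial>count_space UNIV) = ennreal (\<theta> y)"
proof -
  define H where "H x = ennreal (\<theta> x) * ennreal (\<gamma> x (y - x))" for x
  have [measurable]: "H \<in> borel_measurable borel" unfolding H_def by measurable
  have "(\<integral>\<^sup>+x. ennreal (\<theta> x) * indicator cube x * ennreal (\<gamma> x (y + lattice_vec k - x)) \<partial>lborel)
      = (\<integral>\<^sup>+x. H (x - lattice_vec k) * indicator unit_cell x \<partial>lborel)" for k
    unfolding nn_integral_unit_cell_cube H_def
    by (intro nn_integral_cong) (simp add: theta_shift gamma_shift algebra_simps)
  then have "(\<integral>\<^sup>+k. (\<integral>\<^sup>+x. ennreal (\<theta> x) * indicator cube x * ennreal (\<gamma> x (y + lattice_vec k - x)) \<partial>lborel)
      \<partial>count_space UNIV) = (\<integral>\<^sup>+x. H x \<partial>lborel)"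
    by (simp add: nn_integral_tiling_minus[of H])
  also have "\<dots> = (\<integral>\<^sup>+v. H (y - v) \<partial>lborel)"
    by (rule nn_integral_reflect[symmetric]) measurable
  also have "\<dots> = ennreal (\<theta> y)"
    unfolding H_def using mass_into_point[of y] theta_pos gamma_pos
    by (simp add: ennreal_mult[symmetric] less_imp_le)
  finally show ?thesis .
qed

lemma transfer_invariance:
  fixes w :: "real^'n \<Rightarrow> ennreal"
  assumes [measurable]: "w \<in> borel_measurable borel" and per: "lattice_periodic w"
  shows "(\<integral>\<^sup>+x. ennreal (\<theta> x) * (\<integral>\<^sup>+v. ennreal (\<gamma> x v) * w (x + v) \<partial>lborel) * indicator cube x \<partial>lborel)
       = (\<integral>\<^sup>+x. ennreal (\<theta> x) * w x * indicator cube x \<partial>lborel)"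
proof -
  interpret pair_sigma_finite "count_space (UNIV :: (int^'n) set)" "lborel :: (real^'n) measure"
    unfolding pair_sigma_finite_def by (simp add: sigma_finite_measure_count_space sigma_finite_lborel)
  define A where "A y = (\<integral>\<^sup>+x. ennreal (\<theta> x) * indicator cube x * ennreal (\<gamma> x (y - x)) \<partial>lborel)" for y
  have [measurable]: "A \<in> borel_measurable borel"
  proof -
    have "(\<lambda>(y, x). ennreal (\<theta> x) * indicator cube x * ennreal (\<gamma> x (y - x))) \<in> borel_measurable (lborel \<Otimes>\<^sub>M lborel)"
      by measurable
    then show ?thesis unfolding A_def using lborel.borel_measurable_nn_integral by simp
  qed
  have "(\<integral>\<^sup>+x. ennreal (\<theta> x) * (\<integral>\<^sup>+v. ennreal (\<gamma> x v) * w (x + v) \<partial>lborel) * indicator cube x \<partial>lborel)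
      = (\<integral>\<^sup>+x. (\<integral>\<^sup>+y. ennreal (\<theta> x) * indicator cube x * ennreal (\<gamma> x (y - x)) * w y \<partial>lborel) \<partial>lborel)"
  proof (rule nn_integral_cong)
    fix x :: "real^'n"
    have "(\<integral>\<^sup>+v. ennreal (\<gamma> x v) * w (x + v) \<partial>lborel) = (\<integral>\<^sup>+y. ennreal (\<gamma> x (y - x)) * w y \<partial>lborel)"
      using nn_integral_translate[of "\<lambda>y. ennreal (\<gamma> x (y - x)) * w y" x] by simp
    moreover have "(\<integral>\<^sup>+y. ennreal (\<theta> x) * indicator cube x * (ennreal (\<gamma> x (y - x)) * w y) \<partial>lborel)
        = ennreal (\<theta> x) * indicator cube x * (\<integral>\<^sup>+y. ennreal (\<gamma> x (y - x)) * w y \<partial>lborel)"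
      by (rule nn_integral_cmult) measurable
    ultimately show "ennreal (\<theta> x) * (\<integral>\<^sup>+v. ennreal (\<gamma> x v) * w (x + v) \<partial>lborel) * indicator cube x
      = (\<integral>\<^sup>+y. ennreal (\<theta> x) * indicator cube x * ennreal (\<gamma> x (y - x)) * w y \<partial>lborel)"
      by (simp add: ac_simps)
  qed
  also have "\<dots> = (\<integral>\<^sup>+y. (\<integral>\<^sup>+x. ennreal (\<theta> x) * indicator cube x * ennreal (\<gamma> x (y - x)) * w y \<partial>lborel) \<partial>lborel)"
    by (rule lborel_pair.Fubini'[symmetric]) measurable
  also have "\<dots> = (\<integral>\<^sup>+y. w y * A y \<partial>lborel)"
    unfolding A_def by (intro nn_integral_cong, subst nn_integral_multc) (measurable, simp add: mult.commute)
  also have "\<dots> = (\<integral>\<^sup>+k. (\<integral>\<^sup>+y. w y * indicator unit_cell y * A (y + lattice_vec k) \<partial>lborel) \<partial>count_space UNIV)"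
    using nn_integral_tiling[of "\<lambda>y. w y * A y"]
    by (simp add: periodic_lattice_vec[OF per] mult.commute mult.left_commute)
  also have "\<dots> = (\<integral>\<^sup>+y. (\<integral>\<^sup>+k. w y * indicator unit_cell y * A (y + lattice_vec k) \<partial>count_space UNIV) \<partial>lborel)"
    by (rule Fubini'[symmetric]) (rule measurable_pair_measure_countable1, simp_all)
  also have "\<dots> = (\<integral>\<^sup>+y. w y * indicator unit_cell y * ennreal (\<theta> y) \<partial>lborel)"
    using inflow_from_cube by (simp add: nn_integral_cmult A_def algebra_simps)
  also have "\<dots> = (\<integral>\<^sup>+x. ennreal (\<theta> x) * w x * indicator cube x \<partial>lborel)"
    using nn_integral_unit_cell_cube[of "\<lambda>y. ennreal (\<theta> y) * w y"] by (simp add: ac_simps)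
  finally show ?thesis .
qed

definition energy :: "(real^'n \<Rightarrow> real) \<Rightarrow> ennreal" where
  "energy h = (\<integral>\<^sup>+y. ennreal (\<theta> y * (h y)^2) * indicator cube y \<partial>lborel)"

definition wmean :: "(real^'n \<Rightarrow> real) \<Rightarrow> real" where
  "wmean h = (LINT y|lborel. indicator cube y * \<theta> y * h y)"

definition transfer :: "(real^'n \<Rightarrow> real) \<Rightarrow> real^'n \<Rightarrow> real" where
  "transfer h x = (LINT v|lborel. \<gamma> x v * h (x + v))"

lemma energy_integrable:
  assumes [measurable]: "h \<in> borel_measurable borel" and fin: "energy h < \<infinity>"
  shows "integrable lborel (\<lambda>y. indicator cube y * \<theta> y * (h y)^2)"
    and "energy h = ennreal (LINT y|lborel. indicator cube y * \<theta> y * (h y)^2)"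
proof -
  have nonneg: "0 \<le> indicator cube y * \<theta> y * (h y)^2" for y
    using theta_pos[of y] by simp
  have eq: "energy h = (\<integral>\<^sup>+y. ennreal (indicator cube y * \<theta> y * (h y)^2) \<partial>lborel)"
    unfolding energy_def by (intro nn_integral_cong) (simp split: split_indicator)
  show int: "integrable lborel (\<lambda>y. indicator cube y * \<theta> y * (h y)^2)"
    using fin nonneg unfolding eq by (intro integrableI_nonneg AE_I2) auto
  show "energy h = ennreal (LINT y|lborel. indicator cube y * \<theta> y * (h y)^2)"
    unfolding eq using int nonneg by (intro nn_integral_eq_integral AE_I2) auto
qed

lemma wmean_integrable:
  assumes [measurable]: "h \<in> borel_measurable borel" and fin: "energy h < \<infinity>"
  shows "integrable lborel (\<lambda>y. indicator cube y * \<theta> y * h y)"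
  using weighted_mean_square_le(1)[of "\<lambda>y. indicator cube y * \<theta> y" lborel h]
    theta_cube_integrable energy_integrable(1)[OF assms] theta_pos
  by (simp add: less_imp_le)

text \<open>What is left of \<open>\<gamma> x\<close> after removing the minorizing part \<open>\<alpha> \<theta>\<close> on the cube; for \<open>x\<close> in the
  cube it is a nonnegative density of mass \<open>1 - \<alpha>\<close>.\<close>
definition residual :: "real^'n \<Rightarrow> real^'n \<Rightarrow> real" where
  "residual x v = \<gamma> x v - \<alpha> * (indicator cube (x + v) * \<theta> (x + v))"

lemma residual_borel[measurable]: "(\<lambda>v. residual x v) \<in> borel_measurable borel"
  unfolding residual_def by measurable

lemma residual_nonneg: "x \<in> cube \<Longrightarrow> 0 \<le> residual x v"
  using alpha_minorizes[of x "x + v"] gamma_pos[of x v]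
  by (cases "x + v \<in> cube") (auto simp: residual_def)

lemma cube_weight_translate:
  assumes [measurable]: "F \<in> borel_measurable borel"
    and int: "integrable lborel (\<lambda>y. indicator cube y * \<theta> y * F y)"
  shows "integrable lborel (\<lambda>v. indicator cube (x + v) * \<theta> (x + v) * F (x + v))"
    and "(LINT v|lborel. indicator cube (x + v) * \<theta> (x + v) * F (x + v))
       = (LINT y|lborel. indicator cube y * \<theta> y * F y)"
  using integral_translate[of "\<lambda>y. indicator cube y * \<theta> y * F y" x] int by simp_all

lemma residual_integrable: "integrable lborel (residual x)"
  and residual_mass: "(LINT v|lborel. residual x v) = 1 - \<alpha>"
  using cube_weight_translate[of "\<lambda>_. 1" x] theta_cube_integrable theta_cube_integral
    gamma_integrable[of x] gamma_mass[of x]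
  by (simp_all add: residual_def[abs_def])

text \<open>Pointwise form of the one-step estimate: for \<open>x\<close> in the cube, \<open>F (h + k) x - k\<close> minus \<open>\<alpha>\<close> times the
  \<open>\<theta>\<close>-mean of \<open>h\<close> is the integral of \<open>h (x + .)\<close> against the residual density of mass \<open>1 - \<alpha>\<close>,
  so Jensen bounds its square.\<close>
lemma transfer_pointwise:
  assumes [measurable]: "h \<in> borel_measurable borel" and fin: "energy h < \<infinity>" and x: "x \<in> cube"
  shows "ennreal ((transfer (\<lambda>y. h y + k) x - k - \<alpha> * wmean h)^2)
     \<le> ennreal (1 - \<alpha>) * (\<integral>\<^sup>+v. ennreal (residual x v * (h (x + v))^2) \<partial>lborel)"
    (is "_ \<le> _ * ?T")
proof (cases "?T = \<infinity>")
  case True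
  then show ?thesis using alpha_le_half by (simp add: ennreal_mult_top)
next
  case False
  define g where "g v = h (x + v)" for v
  define W where "W v = indicator cube (x + v) * \<theta> (x + v)" for v
  have [measurable]: "g \<in> borel_measurable borel" unfolding g_def by measurable
  have res_nonneg: "\<And>v. 0 \<le> residual x v" using residual_nonneg[OF x] .
  have W_nonneg: "\<And>v. 0 \<le> W v" using theta_pos by (simp add: W_def less_imp_le)
  have res_g2: "integrable lborel (\<lambda>v. residual x v * (g v)^2)"
    using False res_nonneg by (intro integrableI_nonneg AE_I2) (auto simp: g_def top.not_eq_extremum)
  have W_int: "integrable lborel W"
    unfolding W_def using cube_weight_translate(1)[of "\<lambda>_. 1" x] theta_cube_integrable by simp
  have W_g2: "integrable lborel (\<lambda>v. W v * (g v)^2)"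
    using cube_weight_translate(1)[OF _ energy_integrable(1)[OF _ fin], of x] by (simp add: W_def g_def)
  have W_g: "integrable lborel (\<lambda>v. W v * g v)"
    using weighted_mean_square_le(1)[OF W_nonneg W_int W_g2] by simp
  have W_g_integral: "(LINT v|lborel. W v * g v) = wmean h"
    using cube_weight_translate(2)[OF _ wmean_integrable[OF _ fin], of x]
    by (simp add: W_def g_def wmean_def)
  have res_g: "integrable lborel (\<lambda>v. residual x v * g v)"
    and jensen: "(LINT v|lborel. residual x v * g v)^2
        \<le> (LINT v|lborel. residual x v) * (LINT v|lborel. residual x v * (g v)^2)"
    using weighted_mean_square_le[OF res_nonneg residual_integrable res_g2] by simp_all
  have "\<gamma> x v * (h (x + v) + k) = residual x v * g v + \<alpha> * (W v * g v) + k * \<gamma> x v" for v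
    by (simp add: residual_def W_def g_def algebra_simps)
  then have "transfer (\<lambda>y. h y + k) x - k - \<alpha> * wmean h = (LINT v|lborel. residual x v * g v)"
    using res_g W_g gamma_integrable[of x] by (simp add: transfer_def gamma_mass W_g_integral)
  then have "(transfer (\<lambda>y. h y + k) x - k - \<alpha> * wmean h)^2
      \<le> (1 - \<alpha>) * (LINT v|lborel. residual x v * (g v)^2)"
    using jensen by (simp add: residual_mass)
  moreover have "?T = ennreal (LINT v|lborel. residual x v * (g v)^2)"
    unfolding g_def using res_g2 res_nonneg by (intro nn_integral_eq_integral AE_I2) (auto simp: g_def)
  moreover have "0 \<le> (LINT v|lborel. residual x v * (g v)^2)"
    using res_nonneg by (intro integral_nonneg_AE AE_I2) auto
  ultimately show ?thesis
    using alpha_le_half by (simp add: ennreal_mult[symmetric] ennreal_leI)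
qed

lemma second_moment_split:
  assumes [measurable]: "h \<in> borel_measurable borel" and x: "x \<in> cube"
  shows "(\<integral>\<^sup>+v. ennreal (\<gamma> x v) * ennreal ((h (x + v))^2) \<partial>lborel)
       = (\<integral>\<^sup>+v. ennreal (residual x v * (h (x + v))^2) \<partial>lborel) + ennreal \<alpha> * energy h"
proof -
  have "ennreal (\<gamma> x v) * ennreal ((h (x + v))^2)
      = ennreal (residual x v * (h (x + v))^2)
        + ennreal \<alpha> * ennreal (indicator cube (x + v) * \<theta> (x + v) * (h (x + v))^2)" for v
  proof -
    have "0 \<le> indicator cube (x + v) * \<theta> (x + v) * (h (x + v))^2"
      using theta_pos[of "x + v"] by simp
    moreover have "0 \<le> residual x v * (h (x + v))^2"
      using residual_nonneg[OF x, of v] by simp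
    ultimately show ?thesis
      using alpha_pos gamma_pos[of x v]
      by (simp add: ennreal_mult[symmetric] ennreal_plus[symmetric] residual_def algebra_simps)
  qed
  then have "(\<integral>\<^sup>+v. ennreal (\<gamma> x v) * ennreal ((h (x + v))^2) \<partial>lborel)
      = (\<integral>\<^sup>+v. ennreal (residual x v * (h (x + v))^2) \<partial>lborel)
        + ennreal \<alpha> * (\<integral>\<^sup>+v. ennreal (indicator cube (x + v) * \<theta> (x + v) * (h (x + v))^2) \<partial>lborel)"
    by (simp add: nn_integral_add nn_integral_cmult)
  also have "(\<integral>\<^sup>+v. ennreal (indicator cube (x + v) * \<theta> (x + v) * (h (x + v))^2) \<partial>lborel) = energy h"
  proof -
    have "(\<integral>\<^sup>+v. ennreal (indicator cube (x + v) * \<theta> (x + v) * (h (x + v))^2) \<partial>lborel)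
        = (\<integral>\<^sup>+y. ennreal (indicator cube y * \<theta> y * (h y)^2) \<partial>lborel)"
      by (rule nn_integral_translate[of "\<lambda>y. ennreal (indicator cube y * \<theta> y * (h y)^2)"]) measurable
    also have "\<dots> = energy h"
      unfolding energy_def by (intro nn_integral_cong) (simp split: split_indicator)
    finally show ?thesis .
  qed
  finally show ?thesis .
qed

text \<open>By invariance, \<open>energy h = X + \<alpha> energy h\<close> where \<open>X\<close> is the residual second moment
  integrated over the cube, so \<open>X = (1 - \<alpha>) energy h\<close>; the pointwise bound gives a further
  factor \<open>1 - \<alpha>\<close>.\<close>
lemma one_step_contraction:
  assumes [measurable]: "h \<in> borel_measurable borel" and per: "lattice_periodic h"
    and fin: "energy h < \<infinity>"
  shows "energy (\<lambda>x. transfer (\<lambda>y. h y + k) x - (k + \<alpha> * wmean h)) \<le> ennreal ((1 - \<alpha>)^2) * energy h"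
proof -
  define T where "T x = (\<integral>\<^sup>+v. ennreal (residual x v * (h (x + v))^2) \<partial>lborel)" for x
  define X where "X = (\<integral>\<^sup>+x. ennreal (\<theta> x) * T x * indicator cube x \<partial>lborel)"
  have [measurable]: "T \<in> borel_measurable borel"
  proof -
    have "(\<lambda>(x, v). ennreal (residual x v * (h (x + v))^2)) \<in> borel_measurable (lborel \<Otimes>\<^sub>M lborel)"
      unfolding residual_def by measurable
    then show ?thesis unfolding T_def using lborel.borel_measurable_nn_integral by simp
  qed
  have "energy h = (\<integral>\<^sup>+x. ennreal (\<theta> x) * ennreal ((h x)^2) * indicator cube x \<partial>lborel)"
    unfolding energy_def using theta_pos by (intro nn_integral_cong) (simp add: ennreal_mult less_imp_le)
  also have "\<dots> = (\<integral>\<^sup>+x. ennreal (\<theta> x) * (\<integral>\<^sup>+v. ennreal (\<gamma> x v) * ennreal ((h (x + v))^2) \<partial>lborel)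
                      * indicator cube x \<partial>lborel)"
    using per by (intro transfer_invariance[symmetric]) (auto simp: lattice_periodic_def)
  also have "\<dots> = (\<integral>\<^sup>+x. ennreal (\<theta> x) * T x * indicator cube x
                      + (ennreal \<alpha> * energy h) * (ennreal (\<theta> x) * indicator cube x) \<partial>lborel)"
    by (intro nn_integral_cong) (auto simp: second_moment_split T_def distrib_left ac_simps split: split_indicator)
  also have "\<dots> = X + ennreal \<alpha> * energy h"
    unfolding X_def by (simp add: nn_integral_add nn_integral_cmult theta_cube_nn_integral)
  finally have X: "X = ennreal (1 - \<alpha>) * energy h"
    by (rule ennreal_solve_linear) (use fin alpha_pos alpha_le_half in auto)
  have "energy (\<lambda>x. transfer (\<lambda>y. h y + k) x - (k + \<alpha> * wmean h))
      \<le> (\<integral>\<^sup>+x. ennreal (1 - \<alpha>) * (ennreal (\<theta> x) * T x * indicator cube x) \<partial>lborel)"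
    unfolding energy_def
  proof (intro nn_integral_mono)
    fix x :: "real^'n"
    show "ennreal (\<theta> x * (transfer (\<lambda>y. h y + k) x - (k + \<alpha> * wmean h))^2) * indicator cube x
        \<le> ennreal (1 - \<alpha>) * (ennreal (\<theta> x) * T x * indicator cube x)"
    proof (cases "x \<in> cube")
      case True
      have "ennreal (\<theta> x * (transfer (\<lambda>y. h y + k) x - (k + \<alpha> * wmean h))^2)
          = ennreal (\<theta> x) * ennreal ((transfer (\<lambda>y. h y + k) x - k - \<alpha> * wmean h)^2)"
        using theta_pos[of x] by (simp add: ennreal_mult algebra_simps)
      also have "\<dots> \<le> ennreal (\<theta> x) * (ennreal (1 - \<alpha>) * T x)"
        unfolding T_def by (intro mult_left_mono transfer_pointwise True fin) auto
      finally show ?thesis using True by (simp add: ac_simps)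
    qed simp
  qed
  also have "\<dots> = ennreal (1 - \<alpha>) * X"
    unfolding X_def by (rule nn_integral_cmult) measurable
  also have "\<dots> = ennreal ((1 - \<alpha>)^2) * energy h"
    using X alpha_le_half by (simp add: ennreal_mult power2_eq_square mult.assoc)
  finally show ?thesis .
qed

lemma Fop_borel: "f \<in> borel_measurable borel \<Longrightarrow> Fop \<gamma> m f \<in> borel_measurable borel"
proof (induction m)
  case (Suc m)
  then have [measurable]: "Fop \<gamma> m f \<in> borel_measurable borel" by simp
  have "(\<lambda>(x, v). \<gamma> x v * Fop \<gamma> m f (x + v)) \<in> borel_measurable (lborel \<Otimes>\<^sub>M lborel)" by measurable
  then show ?case using lborel.borel_measurable_lebesgue_integral by simp
qed simp

lemma Fop_periodic:
  assumes per: "lattice_periodic f" shows "lattice_periodic (Fop \<gamma> m f)"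
proof (induction m)
  case (Suc m)
  have "\<gamma> (x + lattice_vec k) v * Fop \<gamma> m f (x + lattice_vec k + v) = \<gamma> x v * Fop \<gamma> m f (x + v)" for x k v
    using periodic_lattice_vec[OF Suc, of "x + v" k] periodic_lattice_vec[OF gamma_per, of x k v]
    by (simp add: algebra_simps)
  then show ?case by (simp add: lattice_periodic_lattice_vec)
qed (simp add: per)

lemma Fop_contraction:
  assumes [measurable]: "f \<in> borel_measurable borel" and per: "lattice_periodic f"
    and fin: "energy f < \<infinity>"
  shows "\<exists>c. energy (\<lambda>y. Fop \<gamma> m f y - c) \<le> ennreal ((1 - \<alpha>)^(2 * m)) * energy f"
proof (induction m)
  case 0
  show ?case by (rule exI[of _ 0]) simp
next
  case (Suc m)
  then obtain c where c: "energy (\<lambda>y. Fop \<gamma> m f y - c) \<le> ennreal ((1 - \<alpha>)^(2 * m)) * energy f"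
    by blast
  define h where "h y = Fop \<gamma> m f y - c" for y
  have [measurable]: "h \<in> borel_measurable borel" unfolding h_def using Fop_borel by measurable
  have "lattice_periodic h" using Fop_periodic[OF per] by (simp add: h_def lattice_periodic_def)
  moreover have "energy h < \<infinity>"
    using c fin unfolding h_def by (simp add: ennreal_mult_less_top le_less_trans)
  moreover have "Fop \<gamma> (Suc m) f y = transfer (\<lambda>y. h y + c) y" for y
    by (simp add: h_def transfer_def)
  ultimately have "energy (\<lambda>y. Fop \<gamma> (Suc m) f y - (c + \<alpha> * wmean h))
      \<le> ennreal ((1 - \<alpha>)^2) * energy h"
    using one_step_contraction[of h c] by simp
  also have "\<dots> \<le> ennreal ((1 - \<alpha>)^2) * (ennreal ((1 - \<alpha>)^(2 * m)) * energy f)"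
    using c unfolding h_def by (intro mult_left_mono) auto
  also have "\<dots> = ennreal ((1 - \<alpha>)^(2 * Suc m)) * energy f"
    using alpha_le_half by (simp add: ennreal_mult mult.assoc power_add power2_eq_square)
  finally show ?case by blast
qed

lemma in_L2_energy:
  assumes "in_L2 \<theta> f"
  shows "f \<in> borel_measurable borel" and "lattice_periodic f" and "energy f < \<infinity>"
proof -
  show "f \<in> borel_measurable borel" "lattice_periodic f" using assms by (simp_all add: in_L2_def)
  have "integrable lborel (\<lambda>x. indicator cube x *\<^sub>R ((f x)^2 * \<theta> x))"
    using assms by (simp add: in_L2_def set_integrable_def)
  then have "(\<integral>\<^sup>+x. ennreal (norm (indicator cube x *\<^sub>R ((f x)^2 * \<theta> x))) \<partial>lborel) < \<infinity>"
    by (simp add: integrable_iff_bounded)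
  moreover have "(\<integral>\<^sup>+x. ennreal (norm (indicator cube x *\<^sub>R ((f x)^2 * \<theta> x))) \<partial>lborel) = energy f"
    unfolding energy_def using theta_pos
    by (intro nn_integral_cong) (auto simp: abs_mult less_imp_le mult.commute split: split_indicator)
  ultimately show "energy f < \<infinity>" by simp
qed

text \<open>Since \<open>g\<close> has \<open>\<theta>\<close>-mean zero, its correlation with \<open>F\<close> only sees \<open>F - c\<close>, and
  Cauchy--Schwarz in \<open>L\<^sup>2(\<theta>)\<close> applies.\<close>
lemma centered_correlation:
  assumes [measurable]: "g \<in> borel_measurable borel" "F \<in> borel_measurable borel"
    and fin_g: "energy g < \<infinity>" and fin_F: "energy (\<lambda>y. F y - c) < \<infinity>" and mean0: "wmean g = 0"
  shows "ennreal ((torus_int (\<lambda>x. \<theta> x * g x * F x))^2) \<le> energy g * energy (\<lambda>y. F y - c)"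
proof -
  define w where "w y = indicator cube y * \<theta> y" for y
  have w_nonneg: "\<And>y. 0 \<le> w y" using theta_pos by (simp add: w_def less_imp_le)
  have g2: "integrable lborel (\<lambda>y. w y * (g y)^2)"
    using energy_integrable(1)[OF _ fin_g] by (simp add: w_def)
  have h2: "integrable lborel (\<lambda>y. w y * (F y - c)^2)"
    using energy_integrable(1)[OF _ fin_F] by (simp add: w_def)
  have gh: "integrable lborel (\<lambda>y. w y * g y * (F y - c))"
    using w_nonneg g2 h2 by (rule integrable_weighted_product) (simp add: w_def)
  have "torus_int (\<lambda>x. \<theta> x * g x * F x) = (LINT y|lborel. w y * g y * (F y - c) + c * (w y * g y))"
    unfolding torus_int_def set_lebesgue_integral_def
    by (intro Bochner_Integration.integral_cong) (simp_all add: w_def algebra_simps)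
  also have "\<dots> = (LINT y|lborel. w y * g y * (F y - c))"
    using gh wmean_integrable[OF _ fin_g] mean0 by (simp add: w_def wmean_def)
  finally have "(torus_int (\<lambda>x. \<theta> x * g x * F x))^2
      \<le> (LINT y|lborel. w y * (g y)^2) * (LINT y|lborel. w y * (F y - c)^2)"
    using weighted_cauchy_schwarz[OF w_nonneg g2 h2 gh] by simp
  moreover have "energy g = ennreal (LINT y|lborel. w y * (g y)^2)"
    using energy_integrable(2)[OF _ fin_g] by (simp add: w_def)
  moreover have "energy (\<lambda>y. F y - c) = ennreal (LINT y|lborel. w y * (F y - c)^2)"
    using energy_integrable(2)[OF _ fin_F] by (simp add: w_def)
  moreover have "0 \<le> (LINT y|lborel. w y * (g y)^2)" "0 \<le> (LINT y|lborel. w y * (F y - c)^2)"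
    using w_nonneg by (auto intro!: integral_nonneg_AE)
  ultimately show ?thesis by (simp add: ennreal_mult[symmetric] ennreal_leI)
qed

lemma correlation_decay:
  assumes f: "in_L2 \<theta> f" and g: "in_L2 \<theta> g" and g_mean: "torus_int (\<lambda>x. g x * \<theta> x) = 0"
  shows "\<exists>C. \<forall>m. \<bar>markov_corr \<theta> \<gamma> g f m\<bar> \<le> C * (1 - \<alpha>) ^ m"
proof -
  note [measurable] = in_L2_energy(1)[OF f] in_L2_energy(1)[OF g]
  obtain Ef where Ef: "energy f = ennreal Ef" "0 \<le> Ef"
    using in_L2_energy(3)[OF f] by (cases "energy f") auto
  obtain Eg where Eg: "energy g = ennreal Eg" "0 \<le> Eg"
    using in_L2_energy(3)[OF g] by (cases "energy g") auto
  have mean0: "wmean g = 0"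
    using g_mean by (simp add: wmean_def torus_int_def set_lebesgue_integral_def mult_ac)
  have rate: "0 \<le> 1 - \<alpha>" using alpha_le_half by simp
  have "\<bar>markov_corr \<theta> \<gamma> g f m\<bar> \<le> sqrt (Eg * Ef) * (1 - \<alpha>) ^ m" for m
  proof -
    obtain c where c: "energy (\<lambda>y. Fop \<gamma> m f y - c) \<le> ennreal ((1 - \<alpha>)^(2 * m)) * energy f"
      using Fop_contraction in_L2_energy[OF f] by blast
    then have fin: "energy (\<lambda>y. Fop \<gamma> m f y - c) < \<infinity>"
      using Ef by (simp add: ennreal_mult_less_top le_less_trans)
    have bound: "(sqrt (Eg * Ef) * (1 - \<alpha>) ^ m)^2 = Eg * ((1 - \<alpha>)^(2 * m) * Ef)"
      using Ef Eg by (simp add: power_mult_distrib power_mult mult_ac)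
    have "ennreal ((markov_corr \<theta> \<gamma> g f m)^2) \<le> energy g * energy (\<lambda>y. Fop \<gamma> m f y - c)"
      unfolding markov_corr_def
      using Fop_borel in_L2_energy(3)[OF g] fin mean0 by (intro centered_correlation) auto
    also have "\<dots> \<le> ennreal Eg * (ennreal ((1 - \<alpha>)^(2 * m)) * ennreal Ef)"
      using c unfolding Ef(1) Eg(1) by (rule mult_left_mono) simp
    also have "\<dots> = ennreal ((sqrt (Eg * Ef) * (1 - \<alpha>) ^ m)^2)"
      unfolding bound using Ef Eg rate by (simp add: ennreal_mult)
    finally have "\<bar>markov_corr \<theta> \<gamma> g f m\<bar>^2 \<le> (sqrt (Eg * Ef) * (1 - \<alpha>) ^ m)^2"
      by (subst (asm) ennreal_le_iff) auto
    then show ?thesis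
      by (rule power2_le_imp_le) (use Ef Eg rate in simp)
  qed
  then show ?thesis by blast
qed
end

section \<open>The kernel of the theorem\<close>

lemma torus_kernel_exponential:
  fixes U :: "real^'n \<Rightarrow> real" and P :: "real^'n" and eps lam :: real
    and phi phib :: "real^'n \<Rightarrow> real"
  assumes U_cont: "continuous_on UNIV U"
    and phi_cont: "continuous_on UNIV phi" and phib_cont: "continuous_on UNIV phib"
    and U_per: "lattice_periodic U" and eps_pos: "eps > 0"
    and phi_per: "lattice_periodic phi" and phib_per: "lattice_periodic phib"
    and theta_norm: "torus_int (theta_of eps phi phib) = 1"
    and gamma_int: "\<forall>x. integrable lborel (gamma_of U P eps phi lam x)
                        \<and> (LINT v | lborel. gamma_of U P eps phi lam x v) = 1"
    and Q_int: "\<forall>x. integrable lborel (Q_of (theta_of eps phi phib) (gamma_of U P eps phi lam) x)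
                     \<and> (LINT v | lborel. Q_of (theta_of eps phi phib) (gamma_of U P eps phi lam) x v) = 1"
  shows "torus_kernel (theta_of eps phi phib) (gamma_of U P eps phi lam)"
proof
  show "continuous_on UNIV (theta_of eps phi phib)"
    unfolding theta_of_def using phi_cont phib_cont eps_pos by (intro continuous_intros) auto
  have "continuous_on UNIV (\<lambda>p::(real^'n)\<times>(real^'n). U (fst p))"
    by (rule continuous_on_compose2[OF U_cont]) (auto intro: continuous_intros)
  moreover have "continuous_on UNIV (\<lambda>p::(real^'n)\<times>(real^'n). phi (fst p))"
    by (rule continuous_on_compose2[OF phi_cont]) (auto intro: continuous_intros)
  moreover have "continuous_on UNIV (\<lambda>p::(real^'n)\<times>(real^'n). fst p + snd p)"
    by (intro continuous_on_add continuous_on_fst continuous_on_snd continuous_on_id)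
  then have "continuous_on UNIV (\<lambda>p::(real^'n)\<times>(real^'n). phi (fst p + snd p))"
    using continuous_on_compose2[OF phi_cont] by simp
  ultimately show "continuous_on UNIV (\<lambda>p. gamma_of U P eps phi lam (fst p) (snd p))"
    unfolding gamma_of_def Lag_def using eps_pos by (intro continuous_intros) auto
  show "lattice_periodic (theta_of eps phi phib)"
    using phi_per phib_per by (simp add: lattice_periodic_def theta_of_def)
  have "gamma_of U P eps phi lam (x + lattice_vec k) v = gamma_of U P eps phi lam x v" for x k v
    using periodic_lattice_vec[OF U_per, of x k] periodic_lattice_vec[OF phi_per, of x k]
      periodic_lattice_vec[OF phi_per, of "x + v" k]
    by (simp add: gamma_of_def Lag_def algebra_simps)
  then show "lattice_periodic (\<lambda>x. gamma_of U P eps phi lam x v)" for v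
    by (simp add: lattice_periodic_lattice_vec)
  show "0 < theta_of eps phi phib x" "0 < gamma_of U P eps phi lam x v" for x v
    by (simp_all add: theta_of_def gamma_of_def)
qed (use theta_norm gamma_int Q_int in blast)+

theorem mainTheorem5:
  fixes U :: "real^'n \<Rightarrow> real" and P :: "real^'n" and eps lam :: real
    and phi phib :: "real^'n \<Rightarrow> real"
  assumes U_smooth: "smooth_fun U" and U_per: "lattice_periodic U"
    and eps_pos: "eps > 0"
    and phi_per: "lattice_periodic phi" and phib_per: "lattice_periodic phib"
    and phi_diff: "\<forall>x. phi differentiable (at x)"
    and phib_diff: "\<forall>x. phib differentiable (at x)"
    and eq1_int: "\<forall>x. integrable lborel (\<lambda>v. exp (- (Lag U P x v + phi (x + v)) / eps))"
    and eq1: "\<forall>x. - eps * ln (LINT v | lborel. exp (- (Lag U P x v + phi (x + v)) / eps)) = phi x + lam"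
    and eq2_int: "\<forall>x. integrable lborel (\<lambda>v. exp (- (Lag U P (x + v) (- v) + phib (x + v)) / eps))"
    and eq2: "\<forall>x. - eps * ln (LINT v | lborel. exp (- (Lag U P (x + v) (- v) + phib (x + v)) / eps)) = phib x + lam"
    and theta_norm: "torus_int (theta_of eps phi phib) = 1"
    and gamma_int: "\<forall>x. integrable lborel (gamma_of U P eps phi lam x)
                        \<and> (LINT v | lborel. gamma_of U P eps phi lam x v) = 1"
    and Q_int: "\<forall>x. integrable lborel (Q_of (theta_of eps phi phib) (gamma_of U P eps phi lam) x)
                     \<and> (LINT v | lborel. Q_of (theta_of eps phi phib) (gamma_of U P eps phi lam) x v) = 1"
    and holonomic: "\<forall>\<psi>. continuous_on UNIV \<psi> \<and> lattice_periodic \<psi> \<longrightarrow>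
        torus_int (\<lambda>x. LINT v | lborel. (\<psi> (x + v) - \<psi> x) * theta_of eps phi phib x
                                          * gamma_of U P eps phi lam x v) = 0"
    and fixed_unique: "\<forall>g1 g2. pos_fixed (gamma_of U P eps phi lam) g1 \<and> pos_fixed (gamma_of U P eps phi lam) g2
        \<longrightarrow> (\<exists>c>0. \<forall>x. g1 x = c * g2 x)"
  shows "\<exists>\<rho>::real. 0 < \<rho> \<and> \<rho> < 1 \<and>
    (\<forall>f g. in_L2 (theta_of eps phi phib) f \<and> in_L2 (theta_of eps phi phib) g
        \<and> torus_int (\<lambda>x. f x * theta_of eps phi phib x) = 0
        \<and> torus_int (\<lambda>x. g x * theta_of eps phi phib x) = 0
      \<longrightarrow> (\<exists>C. \<forall>m. \<bar>markov_corr (theta_of eps phi phib) (gamma_of U P eps phi lam) g f m\<bar> \<le> C * \<rho> ^ m))"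
proof -
  have "continuous_on UNIV U" using U_smooth by (cases rule: smooth_fun.cases) auto
  moreover have "continuous_on UNIV phi" "continuous_on UNIV phib"
    using phi_diff phib_diff by (auto intro: continuous_at_imp_continuous_on
        dest: differentiable_imp_continuous_within)
  ultimately interpret torus_kernel "theta_of eps phi phib" "gamma_of U P eps phi lam"
    using U_per eps_pos phi_per phib_per theta_norm gamma_int Q_int by (rule torus_kernel_exponential)
  show ?thesis
    using alpha_pos alpha_le_half correlation_decay by (intro exI[of _ "1 - \<alpha>"]) auto
qed

end
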